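(* Every first-countable almost compact Tychonoff space has cardinality at most $\mathfrak{c}$.
   Context: A Tychonoff space is almost compact if its Čech–Stone remainder has at most one point, i.e. its Čech–Stone compactification coincides with its one-point compactification. *)

theory Defs
  imports "HOL-Analysis.Analysis"
begin

definition tychonoff_space :: "'a topology \<Rightarrow> bool" where
  "tychonoff_space X \<longleftrightarrow> completely_regular_space X \<and> Hausdorff_space X"

definition stone_cech_compactification :: "'a topology \<Rightarrow> 'a option topology \<Rightarrow> bool" where
  "stone_cech_compactification X Y \<longleftrightarrow>
     compact_space Y \<and> Hausdorff_space Y \<and>
     embedding_map X Y Some \<and>
     Y closure_of (Some ` topspace X) = topspace Y \<and>
     (\<forall>f. continuous_map X (top_of_set {0..1::real}) f \<longrightarrow>
        (\<exists>g. continuous_map Y (top_of_set {0..1::real}) g \<and>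
             (\<forall>x\<in>topspace X. g (Some x) = f x)))"

text \<open>Since the remainder
  has at most one point, the compactification can be realised on 'a option with the only
  possible remainder point None.\<close>
definition almost_compact :: "'a topology \<Rightarrow> bool" where
  "almost_compact X \<longleftrightarrow>
     (\<exists>Y. stone_cech_compactification X Y \<and> topspace Y \<subseteq> insert None (Some ` topspace X))"

end

theory Submission
  imports Defs
begin

text \<open>Realise the Cech-Stone compactification as a compact Hausdorff space Y in which X sits
  as an open first countable subspace S with at most one point outside. A relative version of
  Arhangel'skii's closing-off argument produces a subset F of S of size at most continuum that is
  open in Y, closed in S, and equal to S if it is closed in Y: F is closed under limits of
  sequences, and whenever a compact part of F is covered by finitely many basic neighbourhoods,
  F contains a point of S outside them. Since Y has at most one point outside S, the continuous
  extension of the indicator of the clopen set F shows that F or S - F is closed in Y; in the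
  second case S - F is compact, Hausdorff and first countable, hence of size at most continuum
  by the same argument.\<close>

text \<open>Well-founded countably branching trees index the closure of a point under operations of
  countable arity; with countably many labels there are at most continuum many such trees.\<close>

datatype 'l wftree = Leaf | Node 'l "nat \<Rightarrow> 'l wftree"

primrec fold_wftree :: "'b \<Rightarrow> ('l \<Rightarrow> (nat \<Rightarrow> 'b) \<Rightarrow> 'b) \<Rightarrow> 'l wftree \<Rightarrow> 'b" where
  "fold_wftree a g Leaf = a"
| "fold_wftree a g (Node l f) = g l (\<lambda>n. fold_wftree a g (f n))"

primrec wftree_graph :: "'l wftree \<Rightarrow> (nat list \<times> 'l) set" where
  "wftree_graph Leaf = {}"
| "wftree_graph (Node l f) = insert ([], l) {(i # p, v) | i p v. (p, v) \<in> wftree_graph (f i)}"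

lemma inj_wftree_graph: "inj wftree_graph"
proof (rule injI)
  show "wftree_graph t = wftree_graph t' \<Longrightarrow> t = t'" for t t' :: "'l wftree"
  proof (induction t arbitrary: t')
    case Leaf
    then show ?case by (cases t') auto
  next
    case (Node l f)
    then obtain l' f' where t': "t' = Node l' f'"
      by (cases t') auto
    have "l' = l"
      using Node.prems unfolding t' by (auto simp: set_eq_iff)
    have "wftree_graph (f i) = wftree_graph (f' i)" for i
    proof -
      have "(i # p, v) \<in> wftree_graph (Node l f) \<longleftrightarrow> (i # p, v) \<in> wftree_graph t'" for p v
        using Node.prems by simp
      then show ?thesis
        unfolding t' by auto
    qed
    then show ?case
      using Node.IH t' \<open>l' = l\<close> by auto
  qed
qed

lemma wftree_lepoll_reals: "(UNIV :: 'l::countable wftree set) \<lesssim> (UNIV :: real set)"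
proof -
  have "inj (\<lambda>t. to_nat ` wftree_graph (t :: 'l wftree))"
    using inj_wftree_graph by (simp add: inj_def inj_image_eq_iff)
  then have "(UNIV :: 'l wftree set) \<lesssim> (UNIV :: nat set set)"
    by (auto simp: lepoll_def)
  also have "\<dots> \<approx> (UNIV :: real set)"
    by (rule nat_sets_eqpoll_reals)
  finally show ?thesis .
qed

lemma fold_wftree_in_range:
  assumes "\<And>n. s n \<in> range (fold_wftree a g)"
  shows "g l s \<in> range (fold_wftree a g)"
proof -
  define f where "f n = inv (fold_wftree a g) (s n)" for n
  have "fold_wftree a g (f n) = s n" for n
    unfolding f_def using assms by (rule f_inv_into_f)
  then have "fold_wftree a g (Node l f) = g l s"
    by simp
  then show ?thesis
    by (metis rangeI)
qed

lemma range_fold_wftree_subset: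
  assumes "a \<in> S" "\<And>l s. g l s \<in> S"
  shows "range (fold_wftree a g) \<subseteq> S"
proof -
  have "fold_wftree a g t \<in> S" for t
    by (induction t) (simp_all add: assms)
  then show ?thesis by blast
qed

lemma limitin_sequentially_from_closure_of:
  fixes B :: "nat \<Rightarrow> 'a set"
  assumes "x \<in> X closure_of A"
    and "\<And>n. openin X (B n)" "\<And>n. x \<in> B n"
    and "\<And>U. openin X U \<Longrightarrow> x \<in> U \<Longrightarrow> \<exists>n. B n \<subseteq> U"
  obtains s where "\<And>n. s n \<in> A" "limitin X s x sequentially"
proof -
  have "openin X (\<Inter>k\<le>n. B k) \<and> x \<in> (\<Inter>k\<le>n. B k)" for n
    using assms(2,3) by (intro conjI openin_INT2) auto
  then have "\<forall>n. \<exists>z. z \<in> A \<and> z \<in> (\<Inter>k\<le>n. B k)"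
    using assms(1) unfolding in_closure_of by blast
  then obtain s where s: "\<And>n. s n \<in> A \<and> s n \<in> (\<Inter>k\<le>n. B k)"
    by metis
  have "limitin X s x sequentially"
    unfolding limitin_sequentially
  proof (intro conjI allI impI)
    show "x \<in> topspace X"
      using assms(1) in_closure_of by fastforce
    fix U
    assume "openin X U \<and> x \<in> U"
    then obtain n where "B n \<subseteq> U"
      using assms(4) by blast
    moreover have "s m \<in> B n" if "n \<le> m" for m
      using s[of m] that by simp
    ultimately show "\<exists>N. \<forall>m\<ge>N. s m \<in> U"
      by blast
  qed
  then show thesis
    using s that by blast
qed

lemma first_countable_open_subtopology_obtain_base:
  assumes "openin Y S" "first_countable (subtopology Y S)"
  obtains base :: "'a \<Rightarrow> nat \<Rightarrow> 'a set"
  where "\<And>y n. y \<in> S \<Longrightarrow> openin Y (base y n)"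
    "\<And>y n. y \<in> S \<Longrightarrow> y \<in> base y n" "\<And>y n. y \<in> S \<Longrightarrow> base y n \<subseteq> S"
    "\<And>y U. y \<in> S \<Longrightarrow> openin Y U \<Longrightarrow> y \<in> U \<Longrightarrow> \<exists>n. base y n \<subseteq> U"
proof -
  define is_base where "is_base y b \<longleftrightarrow> (\<forall>n. openin Y (b n) \<and> y \<in> b n \<and> b n \<subseteq> S) \<and>
      (\<forall>U. openin Y U \<and> y \<in> U \<longrightarrow> (\<exists>n. b n \<subseteq> U))" for y and b :: "nat \<Rightarrow> 'a set"
  have "\<exists>b. is_base y b" if y: "y \<in> S" for y
  proof -
    have "y \<in> topspace (subtopology Y S)"
      using y openin_subset[OF assms(1)] by auto
    then have "\<exists>\<B>. countable \<B> \<and> (\<forall>V\<in>\<B>. openin (subtopology Y S) V) \<and>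
        (\<forall>U. openin (subtopology Y S) U \<and> y \<in> U \<longrightarrow> (\<exists>V\<in>\<B>. y \<in> V \<and> V \<subseteq> U))"
      using assms(2) unfolding first_countable_def by (rule bspec[rotated])
    then obtain \<B> where "countable \<B>" and \<B>open: "\<forall>V\<in>\<B>. openin (subtopology Y S) V"
      and \<B>base: "\<forall>U. openin (subtopology Y S) U \<and> y \<in> U \<longrightarrow> (\<exists>V\<in>\<B>. y \<in> V \<and> V \<subseteq> U)"
      by blast
    define \<C> where "\<C> = {V \<in> \<B>. y \<in> V}"
    have local: "\<exists>V\<in>\<C>. V \<subseteq> U" if "openin Y U" "y \<in> U" for U
    proof -
      have "openin (subtopology Y S) (U \<inter> S) \<and> y \<in> U \<inter> S"
        using openin_subtopology_Int[OF that(1)] that(2) y by blast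
      then obtain V where "V \<in> \<B>" "y \<in> V" "V \<subseteq> U \<inter> S"
        using \<B>base by blast
      then show ?thesis
        unfolding \<C>_def by blast
    qed
    have "\<C> \<noteq> {}"
      using local[OF assms(1) y] by blast
    moreover have "countable \<C>"
      using \<open>countable \<B>\<close> unfolding \<C>_def by simp
    ultimately have range: "range (from_nat_into \<C>) = \<C>"
      by simp
    have "\<forall>V\<in>\<C>. openin Y V \<and> y \<in> V \<and> V \<subseteq> S"
      using \<B>open unfolding \<C>_def by (auto simp: openin_open_subtopology[OF assms(1)])
    then have "is_base y (from_nat_into \<C>)"
      using local unfolding is_base_def by (metis range rangeE rangeI)
    then show ?thesis by blast
  qed
  then obtain base where base: "\<forall>y\<in>S. is_base y (base y)"
    using bchoice[of S is_base] by blast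
  show thesis
    by (rule that[of base]) (use base in \<open>auto simp: is_base_def\<close>)
qed

lemma Un_lepoll_reals:
  assumes "A \<lesssim> (UNIV :: real set)" "B \<lesssim> (UNIV :: real set)"
  shows "A \<union> B \<lesssim> (UNIV :: real set)"
proof -
  have "A \<lesssim> {0<..<1::real}" "B \<lesssim> {2<..<3::real}"
    using assms open_interval_eqpoll_reals[of 0 1] open_interval_eqpoll_reals[of 2 3]
    by (simp_all add: eqpoll_sym lepoll_trans2)
  then have "A \<union> B \<lesssim> {0<..<1::real} \<union> {2<..<3}"
    by (rule Un_lepoll_mono) (auto simp: disjnt_def)
  also have "\<dots> \<lesssim> (UNIV :: real set)"
    by (rule subset_imp_lepoll) simp
  finally show ?thesis .
qed

text \<open>The operations of the closing-off argument: \<open>Limit\<close> picks a limit in \<open>S\<close> of the argument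
  sequence \<open>s\<close>; \<open>Avoid ms c\<close> picks a point of \<open>S\<close> in the ambient set given by \<open>c\<close> and the
  centre \<open>s 0\<close> (the whole space, or the closure of a basic neighbourhood of \<open>s 0\<close>) that avoids
  the basic neighbourhoods \<open>base (s (Suc i)) (ms ! i)\<close>, \<open>i < length ms\<close>.\<close>

datatype pick_label = Limit | Avoid "nat list" "nat option"

instance pick_label :: countable
  by countable_datatype

locale local_bases_in_compact =
  fixes Y :: "'a topology" and S :: "'a set" and base :: "'a \<Rightarrow> nat \<Rightarrow> 'a set" and x0 :: 'a
  assumes compact: "compact_space Y" and Hausdorff: "Hausdorff_space Y" and x0: "x0 \<in> S"
    and base_open: "\<And>y n. y \<in> S \<Longrightarrow> openin Y (base y n)"
    and base_mem: "\<And>y n. y \<in> S \<Longrightarrow> y \<in> base y n"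
    and base_subset: "\<And>y n. y \<in> S \<Longrightarrow> base y n \<subseteq> S"
    and base_local: "\<And>y U. y \<in> S \<Longrightarrow> openin Y U \<Longrightarrow> y \<in> U \<Longrightarrow> \<exists>n. base y n \<subseteq> U"
begin

lemma S_subset_topspace: "S \<subseteq> topspace Y"
proof
  fix y
  assume "y \<in> S"
  then show "y \<in> topspace Y"
    using base_mem[of y 0] openin_subset[OF base_open[of y 0]] by blast
qed

lemma openin_S: "openin Y S"
proof (rule openin_subopen[THEN iffD2], intro ballI)
  fix y
  assume "y \<in> S"
  then show "\<exists>T. openin Y T \<and> y \<in> T \<and> T \<subseteq> S"
    using base_open[of y 0] base_mem[of y 0] base_subset[of y 0] by blast
qed

definition ambient :: "nat option \<Rightarrow> 'a \<Rightarrow> 'a set" where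
  "ambient c y = (case c of None \<Rightarrow> topspace Y | Some n \<Rightarrow> Y closure_of base y n)"

definition region :: "pick_label \<Rightarrow> (nat \<Rightarrow> 'a) \<Rightarrow> 'a set" where
  "region l s = (case l of
      Limit \<Rightarrow> {x \<in> S. limitin Y s x sequentially}
    | Avoid ms c \<Rightarrow> ambient c (s 0) \<inter> S - (\<Union>i<length ms. base (s (Suc i)) (ms ! i)))"

lemma region_Limit: "region Limit s = {x \<in> S. limitin Y s x sequentially}"
  by (simp add: region_def)

lemma region_Avoid:
  "region (Avoid ms c) s = ambient c (s 0) \<inter> S - (\<Union>i<length ms. base (s (Suc i)) (ms ! i))"
  by (simp add: region_def)

definition pick :: "pick_label \<Rightarrow> (nat \<Rightarrow> 'a) \<Rightarrow> 'a" where
  "pick l s = (if region l s = {} then x0 else (SOME z. z \<in> region l s))"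

definition generated :: "'a set" where
  "generated = range (fold_wftree x0 pick)"

lemma pick_in_region: "region l s \<noteq> {} \<Longrightarrow> pick l s \<in> region l s"
  by (simp add: pick_def some_in_eq)

lemma pick_in_S: "pick l s \<in> S"
proof -
  have "region l s \<subseteq> S"
    by (cases l) (auto simp: region_def)
  then show ?thesis
    using pick_in_region[of l s] x0 by (auto simp: pick_def)
qed

lemma generated_subset: "generated \<subseteq> S"
  unfolding generated_def using x0 pick_in_S by (rule range_fold_wftree_subset)

lemma x0_in_generated: "x0 \<in> generated"
  unfolding generated_def by (metis fold_wftree.simps(1) rangeI)

lemma pick_in_generated: "(\<And>n. s n \<in> generated) \<Longrightarrow> pick l s \<in> generated"
  unfolding generated_def by (rule fold_wftree_in_range)

lemma generated_lepoll_reals: "generated \<lesssim> (UNIV :: real set)"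
  unfolding generated_def by (rule lepoll_trans[OF image_lepoll wftree_lepoll_reals])

lemma in_generated_if_in_closure_of:
  assumes "x \<in> S" "x \<in> Y closure_of generated"
  shows "x \<in> generated"
proof -
  obtain s where s_generated: "\<And>n. s n \<in> generated" and lim: "limitin Y s x sequentially"
    using limitin_sequentially_from_closure_of[OF assms(2) base_open base_mem base_local, OF assms(1,1,1)]
    by blast
  have unique: "y = x" if "limitin Y s y sequentially" for y
    using limitin_Hausdorff_unique[OF that lim _ Hausdorff] by simp
  have "region Limit s = {x}"
    unfolding region_Limit using assms(1) lim unique by blast
  then have "pick Limit s = x"
    using pick_in_region[of Limit s] by simp
  then show ?thesis
    using pick_in_generated[of s Limit] s_generated by simp
qed

lemma closedin_subtopology_generated: "closedin (subtopology Y S) generated"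
  unfolding closedin_subtopology
proof (intro exI conjI)
  have "generated \<subseteq> Y closure_of generated"
    using closure_of_subset generated_subset S_subset_topspace by (metis order_trans)
  then show "generated = Y closure_of generated \<inter> S"
    using in_generated_if_in_closure_of generated_subset by auto
qed simp

lemma closedin_Int_generated:
  assumes "closedin Y C" "C \<subseteq> S"
  shows "closedin Y (C \<inter> generated)"
proof -
  have "Y closure_of (C \<inter> generated) \<subseteq> C \<inter> generated"
  proof
    fix x
    assume x: "x \<in> Y closure_of (C \<inter> generated)"
    then have "x \<in> C"
      using closure_of_mono[of "C \<inter> generated" C Y] closure_of_closedin[OF assms(1)] by blast
    moreover have "x \<in> Y closure_of generated"
      using x closure_of_mono[of "C \<inter> generated" generated Y] by blast
    ultimately show "x \<in> C \<inter> generated"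
      using in_generated_if_in_closure_of assms(2) by blast
  qed
  then show ?thesis
    using closure_of_subset_eq closedin_subset[OF assms(1)] by blast
qed

lemma base_separates:
  assumes "z \<in> S" "x \<in> topspace Y" "x \<noteq> z"
  obtains n where "x \<notin> base z n"
proof -
  have "z \<in> topspace Y"
    using assms(1) S_subset_topspace by blast
  then obtain U V where "openin Y U" "openin Y V" "z \<in> U" "x \<in> V" "disjnt U V"
    using Hausdorff assms(2,3) unfolding Hausdorff_space_def by metis
  moreover obtain n where "base z n \<subseteq> U"
    using base_local[OF assms(1) \<open>openin Y U\<close> \<open>z \<in> U\<close>] by blast
  ultimately show thesis
    using that by (auto simp: disjnt_iff)
qed

lemma base_cover_avoiding:
  assumes "compactin Y K" "K \<subseteq> S" "x \<in> topspace Y - K"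
  obtains zs ms where "length ms = length zs" "set zs \<subseteq> K"
    "K \<subseteq> (\<Union>i<length zs. base (zs ! i) (ms ! i))" "x \<notin> (\<Union>i<length zs. base (zs ! i) (ms ! i))"
proof -
  have "\<exists>n. x \<notin> base z n" if z: "z \<in> K" for z
  proof -
    obtain n where "x \<notin> base z n"
      using base_separates[of z x] z assms(2,3) by blast
    then show ?thesis ..
  qed
  then obtain m where m: "\<And>z. z \<in> K \<Longrightarrow> x \<notin> base z (m z)"
    by metis
  have "\<And>U. U \<in> (\<lambda>z. base z (m z)) ` K \<Longrightarrow> openin Y U"
    using base_open assms(2) by blast
  moreover have "K \<subseteq> \<Union>((\<lambda>z. base z (m z)) ` K)"
    using base_mem assms(2) by blast
  ultimately have "\<exists>\<F>. finite \<F> \<and> \<F> \<subseteq> (\<lambda>z. base z (m z)) ` K \<and> K \<subseteq> \<Union>\<F>"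
    by (rule compactinD[OF assms(1)])
  then obtain K' where "finite K'" "K' \<subseteq> K" and cover: "K \<subseteq> (\<Union>z\<in>K'. base z (m z))"
    unfolding ex_finite_subset_image by blast
  then obtain zs where zs: "set zs = K'"
    using finite_list by blast
  have "(\<Union>i<length zs. base (zs ! i) (map m zs ! i)) = (\<Union>z\<in>set zs. base z (m z))"
    by (force simp: in_set_conv_nth)
  then show thesis
    using that[of "map m zs" zs] zs cover m \<open>K' \<subseteq> K\<close> by auto
qed

lemma ambient_Int_S_subset_generated:
  assumes K: "compactin Y K" "K \<subseteq> generated" and y: "y \<in> generated"
    and trace: "ambient c y \<inter> generated \<subseteq> K"
  shows "ambient c y \<inter> S \<subseteq> generated"
proof
  fix x
  assume x: "x \<in> ambient c y \<inter> S"
  show "x \<in> generated"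
  proof (rule ccontr)
    \<comment> \<open>Cover \<open>K\<close> by finitely many basic sets missing \<open>x\<close>; the \<open>Avoid\<close> pick for them lies in
      the ambient set and in \<open>generated\<close>, hence in \<open>K\<close>, yet outside the cover.\<close>
    assume "x \<notin> generated"
    then have "x \<in> topspace Y - K"
      using K(2) x S_subset_topspace by blast
    moreover have "K \<subseteq> S"
      using K(2) generated_subset by blast
    ultimately obtain zs ms where length: "length ms = length zs" and zs: "set zs \<subseteq> K"
      and cover: "K \<subseteq> (\<Union>i<length zs. base (zs ! i) (ms ! i))"
      and avoid: "x \<notin> (\<Union>i<length zs. base (zs ! i) (ms ! i))"
      by (metis base_cover_avoiding[OF K(1)])
    define s where "s i = (if i < length (y # zs) then (y # zs) ! i else y)" for i
    have "set (y # zs) \<subseteq> generated"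
      using y zs K(2) by auto
    then have s_generated: "s i \<in> generated" for i
      unfolding s_def using y nth_mem[of i "y # zs"] by auto
    have "s 0 = y" and s_Suc: "\<And>i. i < length zs \<Longrightarrow> s (Suc i) = zs ! i"
      by (simp_all add: s_def)
    moreover have "(\<Union>i<length ms. base (s (Suc i)) (ms ! i)) = (\<Union>i<length zs. base (zs ! i) (ms ! i))"
      using length s_Suc by (intro SUP_cong) auto
    ultimately have "region (Avoid ms c) s = ambient c y \<inter> S - (\<Union>i<length zs. base (zs ! i) (ms ! i))"
      by (simp only: region_Avoid)
    then have "pick (Avoid ms c) s \<in> ambient c y \<inter> S - (\<Union>i<length zs. base (zs ! i) (ms ! i))"
      using pick_in_region[of "Avoid ms c" s] x avoid by blast
    moreover have "pick (Avoid ms c) s \<in> generated"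
      using pick_in_generated[of s] s_generated by simp
    ultimately show False
      using trace cover by blast
  qed
qed

lemma closure_of_base_subset:
  assumes "y \<in> S"
  obtains n where "Y closure_of base y n \<subseteq> S"
proof -
  have "regular_space Y"
    using compact Hausdorff by (rule compact_Hausdorff_imp_regular_space)
  moreover have "closedin Y (topspace Y - S)"
    using openin_S by blast
  moreover have "y \<in> topspace Y - (topspace Y - S)"
    using assms S_subset_topspace by blast
  ultimately obtain U where U: "openin Y U" "y \<in> U" "disjnt (topspace Y - S) (Y closure_of U)"
    unfolding regular_space by blast
  then have "Y closure_of U \<subseteq> S"
    using closure_of_subset_topspace by (fastforce simp: disjnt_iff)
  moreover obtain n where "base y n \<subseteq> U"
    using base_local[OF assms U(1,2)] by blast
  ultimately show thesis
    using that closure_of_mono by blast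
qed

lemma openin_generated: "openin Y generated"
proof (rule openin_subopen[THEN iffD2], intro ballI)
  fix y
  assume y: "y \<in> generated"
  then have "y \<in> S"
    using generated_subset by blast
  then obtain n where n: "Y closure_of base y n \<subseteq> S"
    by (rule closure_of_base_subset)
  let ?C = "Y closure_of base y n"
  have "closedin Y (?C \<inter> generated)"
    using n by (intro closedin_Int_generated) simp_all
  then have "compactin Y (?C \<inter> generated)"
    by (rule closedin_compact_space[OF compact])
  then have "ambient (Some n) y \<inter> S \<subseteq> generated"
    using y by (intro ambient_Int_S_subset_generated) (auto simp: ambient_def)
  moreover have "base y n \<subseteq> ambient (Some n) y \<inter> S"
    using base_open[OF \<open>y \<in> S\<close>] base_subset[OF \<open>y \<in> S\<close>]
    by (auto simp: ambient_def intro: closure_of_subset[OF openin_subset, THEN subsetD])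
  ultimately show "\<exists>T. openin Y T \<and> y \<in> T \<and> T \<subseteq> generated"
    using base_open[OF \<open>y \<in> S\<close>] base_mem[OF \<open>y \<in> S\<close>] by blast
qed

lemma generated_eq_if_closedin:
  assumes "closedin Y generated"
  shows "generated = S"
proof -
  have "compactin Y generated"
    using assms by (rule closedin_compact_space[OF compact])
  then have "ambient None x0 \<inter> S \<subseteq> generated"
    using x0_in_generated by (intro ambient_Int_S_subset_generated) (auto simp: ambient_def)
  then show ?thesis
    using generated_subset S_subset_topspace by (auto simp: ambient_def)
qed

end

lemma open_first_countable_subset_clopen_part:
  fixes S :: "'a set"
  assumes "compact_space Y" "Hausdorff_space Y" "openin Y S" "first_countable (subtopology Y S)"
  obtains F where "F \<subseteq> S" "F \<lesssim> (UNIV :: real set)" "openin Y F"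
    "closedin (subtopology Y S) F" "closedin Y F \<Longrightarrow> F = S"
proof (cases "S = {}")
  case True
  then show thesis
    by (intro that[of "{}"]) auto
next
  case False
  then obtain x0 where "x0 \<in> S"
    by blast
  obtain base :: "'a \<Rightarrow> nat \<Rightarrow> 'a set" where "\<And>y n. y \<in> S \<Longrightarrow> openin Y (base y n)"
    "\<And>y n. y \<in> S \<Longrightarrow> y \<in> base y n" "\<And>y n. y \<in> S \<Longrightarrow> base y n \<subseteq> S"
    "\<And>y U. y \<in> S \<Longrightarrow> openin Y U \<Longrightarrow> y \<in> U \<Longrightarrow> \<exists>n. base y n \<subseteq> U"
    using first_countable_open_subtopology_obtain_base[OF assms(3,4)] by blast
  then interpret local_bases_in_compact Y S base x0
    using assms(1,2) \<open>x0 \<in> S\<close> by unfold_locales simp_all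
  show thesis
    using generated_subset generated_lepoll_reals openin_generated closedin_subtopology_generated
      generated_eq_if_closedin by (rule that)
qed

corollary compact_first_countable_lepoll_reals:
  assumes "compact_space Z" "Hausdorff_space Z" "first_countable Z"
  shows "topspace Z \<lesssim> (UNIV :: real set)"
proof -
  obtain F where "F \<lesssim> (UNIV :: real set)" "closedin Z F" "closedin Z F \<Longrightarrow> F = topspace Z"
    by (rule open_first_countable_subset_clopen_part[of Z "topspace Z"]) (use assms in simp_all)
  then show ?thesis
    by simp
qed

lemma closedin_first_countable_lepoll_reals:
  assumes "compact_space Y" "Hausdorff_space Y" "closedin Y C" "first_countable (subtopology Y C)"
  shows "C \<lesssim> (UNIV :: real set)"
proof -
  have "topspace (subtopology Y C) \<lesssim> (UNIV :: real set)"
    using closedin_compact_space[OF assms(1,3)] Hausdorff_space_subtopology[OF assms(2)] assms(4)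
    by (intro compact_first_countable_lepoll_reals compact_space_subtopology)
  then show ?thesis
    using closedin_subset[OF assms(3)] by (simp add: Int_absorb1)
qed

lemma open_first_countable_subset_lepoll_reals:
  assumes "compact_space Y" "Hausdorff_space Y" "openin Y S" "first_countable (subtopology Y S)"
    and clopen_split: "\<And>F. openin (subtopology Y S) F \<Longrightarrow> closedin (subtopology Y S) F \<Longrightarrow>
      closedin Y F \<or> closedin Y (S - F)"
  shows "S \<lesssim> (UNIV :: real set)"
proof -
  obtain F where F: "F \<subseteq> S" "F \<lesssim> (UNIV :: real set)" "openin Y F"
    "closedin (subtopology Y S) F" "closedin Y F \<Longrightarrow> F = S"
    using open_first_countable_subset_clopen_part[OF assms(1-4)] by blast
  show ?thesis
  proof (cases "closedin Y F")
    case True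
    then show ?thesis
      using F by simp
  next
    case False
    have "openin (subtopology Y S) F"
      using openin_subtopology_Int2[OF F(3), of S] F(1) by (simp add: Int_absorb1)
    then have "closedin Y (S - F)"
      using clopen_split F(4) False by blast
    moreover have "first_countable (subtopology Y (S - F))"
      using first_countable_subtopology[OF assms(4), of "S - F"]
      by (simp add: subtopology_subtopology Int_absorb1)
    ultimately have "S - F \<lesssim> (UNIV :: real set)"
      using assms(1,2) by (intro closedin_first_countable_lepoll_reals)
    then have "F \<union> (S - F) \<lesssim> (UNIV :: real set)"
      using F(2) by (intro Un_lepoll_reals)
    moreover have "F \<union> (S - F) = S"
      using F(1) by blast
    ultimately show ?thesis
      by simp
  qed
qed

lemma continuous_map_clopen_indicator:
  assumes "openin X A" "closedin X A"
  shows "continuous_map X (top_of_set {0..1::real}) (\<lambda>x. if x \<in> A then 1 else 0)"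
proof -
  have "X frontier_of {x. x \<in> A} = {}"
    using assms frontier_of_eq_empty[OF openin_subset[OF assms(1)]] by simp
  then show ?thesis
    by (intro continuous_map_cases) auto
qed

lemma stone_cech_compactification_Some_image_subset:
  assumes "stone_cech_compactification X Y"
  shows "Some ` topspace X \<subseteq> topspace Y"
  using assms unfolding stone_cech_compactification_def embedding_map_def
  by (metis continuous_map_image_subset_topspace continuous_map_in_subtopology
      homeomorphic_imp_continuous_map)

lemma stone_cech_almost_compact_openin:
  assumes "stone_cech_compactification X Y" "topspace Y \<subseteq> insert None (Some ` topspace X)"
  shows "openin Y (Some ` topspace X)"
proof -
  have "closedin Y (topspace Y - Some ` topspace X)"
    using assms unfolding stone_cech_compactification_def
    by (intro closedin_Hausdorff_finite) (auto intro: finite_subset[of _ "{None}"])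
  then show ?thesis
    using stone_cech_compactification_Some_image_subset[OF assms(1)]
    by (metis Diff_Diff_Int inf.absorb_iff2 openin_diff openin_topspace)
qed

lemma stone_cech_almost_compact_clopen_split:
  assumes Y: "stone_cech_compactification X Y" "topspace Y \<subseteq> insert None (Some ` topspace X)"
    and F: "openin (subtopology Y (Some ` topspace X)) F" "closedin (subtopology Y (Some ` topspace X)) F"
  shows "closedin Y F \<or> closedin Y (Some ` topspace X - F)"
proof -
  let ?S = "Some ` topspace X"
  have Some_cont: "continuous_map X (subtopology Y ?S) Some"
    using Y(1) unfolding stone_cech_compactification_def embedding_map_def
    by (blast intro: homeomorphic_imp_continuous_map)
  define A where "A = {x \<in> topspace X. Some x \<in> F}"
  have "openin X A" "closedin X A"
    unfolding A_def
    using openin_continuous_map_preimage[OF Some_cont F(1)]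
      closedin_continuous_map_preimage[OF Some_cont F(2)] by simp_all
  then have "continuous_map X (top_of_set {0..1::real}) (\<lambda>x. if x \<in> A then 1 else 0)"
    by (rule continuous_map_clopen_indicator)
  then obtain g where g: "continuous_map Y (top_of_set {0..1::real}) g"
    and g_Some: "\<And>x. x \<in> topspace X \<Longrightarrow> g (Some x) = (if x \<in> A then 1 else 0)"
    using Y(1) unfolding stone_cech_compactification_def by blast
  define level where "level c = {y \<in> topspace Y. g y = c}" for c :: real
  have "F \<subseteq> ?S"
    using closedin_subset[OF F(2)] by simp
  then have "level 1 - {None} = F" "level 0 - {None} = ?S - F"
    using Y(2) stone_cech_compactification_Some_image_subset[OF Y(1)] g_Some
    unfolding level_def A_def by auto
  moreover have "closedin Y (level c)" for c
    unfolding level_def using g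
    by (intro closedin_continuous_map_preimage[of Y euclideanreal g "{c}", simplified])
      (auto simp: continuous_map_in_subtopology)
  moreover have "None \<notin> level 1 \<or> None \<notin> level 0"
    unfolding level_def by auto
  ultimately show ?thesis
    by (metis Diff_empty Diff_insert0)
qed

theorem mainTheorem12:
  fixes X :: "'a topology"
  assumes "tychonoff_space X" and "first_countable X" and "almost_compact X"
  shows "topspace X \<lesssim> (UNIV :: real set)"
proof -
  obtain Y where Y: "stone_cech_compactification X Y" "topspace Y \<subseteq> insert None (Some ` topspace X)"
    using assms(3) unfolding almost_compact_def by blast
  have "first_countable (subtopology Y (Some ` topspace X))"
    using Y(1) assms(2) homeomorphic_space_first_countability embedding_map_imp_homeomorphic_space
    unfolding stone_cech_compactification_def by blast
  then have "Some ` topspace X \<lesssim> (UNIV :: real set)"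
    using Y stone_cech_almost_compact_openin stone_cech_almost_compact_clopen_split[OF Y]
    by (intro open_first_countable_subset_lepoll_reals) (auto simp: stone_cech_compactification_def)
  moreover have "topspace X \<lesssim> Some ` topspace X"
    unfolding lepoll_def by (intro exI[of _ Some]) auto
  ultimately show ?thesis
    using lepoll_trans by blast
qed

end
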